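(* Let $V$ be a finite vocabulary. Each word $x\in V$ has a synonym set $S_x\subseteq V$ with $x\in S_x$, the synonym relation being symmetric, and a nonempty perturbation set $P_x\subseteq V$. Fix integers $L\ge1$, $0\le R\le L$, a finite label set $\mathcal{Y}$ with $|\mathcal{Y}|\ge2$, and a classifier $f:V^L\to\mathcal{Y}$. For $X=x_1,\ldots,x_L\in V^L$ let $S_X=\{X'\in V^L: \sum_i\mathbb{I}\{x'_i\ne x_i\}\le R,\ x'_i\in S_{x_i}\ \forall i\}$, let $\Pi_X(Z)=\prod_{i=1}^L\mathbb{I}\{z_i\in P_{x_i}\}/|P_{x_i}|$, let $g^{\mathrm{RS}}(X,c)=\mathbb{P}_{Z\sim\Pi_X}(f(Z)=c)$, and let $f^{\mathrm{RS}}(X)=\arg\max_{c\in\mathcal{Y}}g^{\mathrm{RS}}(X,c)$. Assume $|P_x|=|P_{x'}|$ for every word $x$ and every $x'\in S_x$. Let $q_x=\min_{x'\in S_x}|P_x\cap P_{x'}|/|P_x|$, and for a sentence $X$ order its positions $i_1,\ldots,i_L$ so that $q_{x_{i_1}}\le\cdots\le q_{x_{i_L}}$ and put $q_X=1-\prod_{j=1}^R q_{x_{i_j}}$. For a sentence $X$ and a label $y\in\mathcal{Y}$ define $y_B=\arg\max_{c\in\mathcal{Y},c\ne y}g^{\mathrm{RS}}(X,c)$. If $$\Delta_X:=g^{\mathrm{RS}}(X,y)-g^{\mathrm{RS}}(X,y_B)-2q_X>0,$$ then $f^{\mathrm{RS}}(X')=f^{\mathrm{RS}}(X)=y$ for every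 $X'\in S_X$ (i.e. $y$ is the unique maximizer of $c\mapsto g^{\mathrm{RS}}(X',c)$ for every $X'\in S_X$).
   Context: $f^{\mathrm{RS}}$ is the randomized-smoothing classifier built from the base classifier $f$ by uniformly random word substitutions from the perturbation sets. *)

theory Defs
  imports Complex_Main
begin

text \<open>The randomized-smoothing score
 g^RS(X,c) = P_{Z ~ Pi_X}(f Z = c) is written as the finite sum of the product
 density Pi_X over all sentences Z of length L with f Z = c.\<close>

definition PiX :: "('w \<Rightarrow> 'w set) \<Rightarrow> nat \<Rightarrow> 'w list \<Rightarrow> 'w list \<Rightarrow> real" where
  "PiX P L X Z = (\<Prod>i<L. (if Z ! i \<in> P (X ! i) then 1 else 0) / real (card (P (X ! i))))"

definition gRS :: "('w \<Rightarrow> 'w set) \<Rightarrow> nat \<Rightarrow> ('w list \<Rightarrow> 'y) \<Rightarrow> 'w list \<Rightarrow> 'y \<Rightarrow> real" where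
  "gRS P L f X c = (\<Sum>Z\<in>{Z. length Z = L \<and> f Z = c}. PiX P L X Z)"

text \<open>f^RS(X) = argmax_c g^RS(X,c) (well-defined when the maximiser is unique).\<close>
definition fRS :: "('w \<Rightarrow> 'w set) \<Rightarrow> nat \<Rightarrow> ('w list \<Rightarrow> 'y) \<Rightarrow> 'w list \<Rightarrow> 'y" where
  "fRS P L f X = (THE c. \<forall>c'. c' \<noteq> c \<longrightarrow> gRS P L f X c' < gRS P L f X c)"

text \<open>y_B = argmax over c \<noteq> y of g^RS(X,c) (an arbitrary maximiser).\<close>
definition yB :: "('w \<Rightarrow> 'w set) \<Rightarrow> nat \<Rightarrow> ('w list \<Rightarrow> 'y) \<Rightarrow> 'w list \<Rightarrow> 'y \<Rightarrow> 'y" where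
  "yB P L f X y = (SOME c. c \<noteq> y \<and> (\<forall>c'. c' \<noteq> y \<longrightarrow> gRS P L f X c' \<le> gRS P L f X c))"

definition SX :: "('w \<Rightarrow> 'w set) \<Rightarrow> nat \<Rightarrow> nat \<Rightarrow> 'w list \<Rightarrow> 'w list set" where
  "SX S L R X = {X'. length X' = L \<and> card {i. i < L \<and> X' ! i \<noteq> X ! i} \<le> R
                      \<and> (\<forall>i<L. X' ! i \<in> S (X ! i))}"

definition qw :: "('w \<Rightarrow> 'w set) \<Rightarrow> ('w \<Rightarrow> 'w set) \<Rightarrow> 'w \<Rightarrow> real" where
  "qw S P x = Min ((\<lambda>x'. real (card (P x \<inter> P x')) / real (card (P x))) ` S x)"

definition qX :: "('w \<Rightarrow> 'w set) \<Rightarrow> ('w \<Rightarrow> 'w set) \<Rightarrow> nat \<Rightarrow> 'w list \<Rightarrow> real" where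
  "qX S P R X = 1 - prod_list (take R (sort (map (qw S P) X)))"

end

theory Submission
  imports Defs "HOL-Library.Multiset"
begin

text \<open>Moving from X to X' changes every score g^RS(\<cdot>, c) by at most the total variation
  distance of the product measures Pi_X and Pi_X'. Because synonyms have perturbation sets of
  equal size, the pointwise minimum of the two densities is again a product, of total mass
  prod_i |P_{x_i} \<inter> P_{x'_i}| / |P_{x_i}|, and the distance is at most one minus this mass.
  Only the at most R positions where X' differs from X give factors below 1, each at least
  q_{x_i}, so the mass is at least the product of the R smallest q-values and the distance is
  at most q_X. A margin larger than 2 q_X therefore survives the move to X'.\<close>

lemma prod_list_le_one:
  fixes xs :: "'a::linordered_semidom list"
  assumes "set xs \<subseteq> {0..1}"
  shows "prod_list xs \<le> 1"
  using assms by (induction xs) (auto intro!: mult_le_one prod_list_nonneg)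

lemma prod_list_take_sorted_le_prod_mset:
  fixes xs :: "'a::linordered_semidom list"
  assumes "sorted xs" "set xs \<subseteq> {0..1}" "A \<subseteq># mset xs" "size A \<le> R"
  shows "prod_list (take R xs) \<le> prod_mset A"
  using assms
proof (induction xs arbitrary: R A)
  case Nil
  then show ?case by simp
next
  case (Cons x xs)
  have unit: "set xs \<subseteq> {0..1}" "0 \<le> x" "x \<le> 1"
    using Cons.prems(2) by auto
  show ?case
  proof (cases "A = {#}")
    case True
    have "set (take R (x # xs)) \<subseteq> {0..1}"
      using Cons.prems(2) set_take_subset[of R "x # xs"] by blast
    then show ?thesis using True by (simp add: prod_list_le_one)
  next
    case False
    then obtain R' where R: "R = Suc R'" using Cons.prems(4) by (cases R) auto
    obtain a A' where A: "A = add_mset a A'" and "x \<le> a" and A': "A' \<subseteq># mset xs"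
    proof (cases "x \<in># A")
      case True
      then show ?thesis using Cons.prems(3) that[of x "A - {#x#}"]
        by (simp add: insert_DiffM subset_eq_diff_conv)
    next
      case False
      obtain a where "a \<in># A" using \<open>A \<noteq> {#}\<close> by blast
      have "A \<subseteq># mset xs" using Cons.prems(3) False
        by (simp add: subseteq_mset_def not_in_iff) (metis le0)
      then have "x \<le> a" "A - {#a#} \<subseteq># mset xs"
        using Cons.prems(1) \<open>a \<in># A\<close>
        by (auto dest: mset_subset_eqD intro: subset_mset.order_trans[OF diff_subset_eq_self])
      then show ?thesis using that[of a "A - {#a#}"] \<open>a \<in># A\<close> by simp
    qed
    have "prod_list (take R' xs) \<le> prod_mset A'"
      using Cons.IH[of A' R'] Cons.prems A' A R unit by simp
    moreover have "0 \<le> prod_list (take R' xs)"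
      using unit set_take_subset[of R' xs] by (intro prod_list_nonneg) auto
    ultimately show ?thesis
      using A R \<open>x \<le> a\<close> unit by (simp add: mult_mono)
  qed
qed

lemma prod_take_sort_le_prod_nth:
  fixes xs :: "'a::linordered_semidom list"
  assumes "set xs \<subseteq> {0..1}" "D \<subseteq> {..<length xs}" "card D \<le> R"
  shows "prod_list (take R (sort xs)) \<le> (\<Prod>i\<in>D. xs ! i)"
proof -
  have "image_mset ((!) xs) (mset_set D) \<subseteq># image_mset ((!) xs) (mset_set {..<length xs})"
    using assms(2) by (intro image_mset_subseteq_mono subset_imp_msubset_mset_set) simp_all
  also have "\<dots> = mset (map ((!) xs) [0..<length xs])"
    by (simp add: atLeast0LessThan)
  also have "\<dots> = mset xs"
    by (simp add: map_nth)
  finally have "prod_list (take R (sort xs)) \<le> prod_mset (image_mset ((!) xs) (mset_set D))"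
    using assms(1,3) by (intro prod_list_take_sorted_le_prod_mset) simp_all
  then show ?thesis
    by (simp add: prod_unfold_prod_mset)
qed

lemma sum_lists_length_prod:
  fixes g :: "nat \<Rightarrow> 'a::finite \<Rightarrow> 'b::comm_semiring_1"
  shows "(\<Sum>Z | length Z = n. \<Prod>i<n. g i (Z ! i)) = (\<Prod>i<n. \<Sum>z\<in>UNIV. g i z)"
proof (induction n arbitrary: g)
  case 0
  have "{Z::'a list. length Z = 0} = {[]}" by auto
  then show ?case by simp
next
  case (Suc n)
  have "{Z::'a list. length Z = Suc n} = (\<lambda>(z, Z). z # Z) ` (UNIV \<times> {Z. length Z = n})"
    by (auto simp: length_Suc_conv)
  moreover have "inj_on (\<lambda>(z, Z). z # Z) (UNIV \<times> {Z::'a list. length Z = n})"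
    by (auto simp: inj_on_def)
  ultimately have "(\<Sum>Z | length Z = Suc n. \<Prod>i<Suc n. g i (Z ! i))
      = (\<Sum>z\<in>UNIV. \<Sum>Z | length Z = n. g 0 z * (\<Prod>i<n. g (Suc i) (Z ! i)))"
    by (simp add: sum.reindex sum.cartesian_product prod.lessThan_Suc_shift case_prod_unfold
        del: prod.lessThan_Suc)
  also have "\<dots> = (\<Sum>z\<in>UNIV. g 0 z * (\<Prod>i<n. \<Sum>z\<in>UNIV. g (Suc i) z))"
    by (simp add: Suc.IH[of "\<lambda>i. g (Suc i)"] flip: sum_distrib_left)
  also have "\<dots> = (\<Sum>z\<in>UNIV. g 0 z) * (\<Prod>i<n. \<Sum>z\<in>UNIV. g (Suc i) z)"
    by (simp add: sum_distrib_right)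
  also have "\<dots> = (\<Prod>i<Suc n. \<Sum>z\<in>UNIV. g i z)"
    by (simp add: prod.lessThan_Suc_shift del: prod.lessThan_Suc)
  finally show ?case .
qed

lemma sum_diff_le_one_minus_sum_common:
  fixes p q m :: "'a \<Rightarrow> real"
  assumes "finite U" "A \<subseteq> U" "sum p U = 1"
    and "\<And>Z. m Z \<le> p Z" "\<And>Z. m Z \<le> q Z"
  shows "sum p A - sum q A \<le> 1 - sum m U"
proof -
  have "sum p A - sum q A \<le> (\<Sum>Z\<in>A. p Z - m Z)"
    using assms(5) by (simp add: sum_mono flip: sum_subtractf)
  also have "\<dots> \<le> (\<Sum>Z\<in>U. p Z - m Z)"
    using assms(1,2,4) by (intro sum_mono2) auto
  also have "\<dots> = 1 - sum m U"
    using assms(3) by (simp add: sum_subtractf)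
  finally show ?thesis .
qed

definition uniform_density :: "'a set \<Rightarrow> 'a \<Rightarrow> real" where
  "uniform_density B z = (if z \<in> B then 1 else 0) / real (card B)"

lemma uniform_density_nonneg [simp]: "0 \<le> uniform_density B z"
  by (simp add: uniform_density_def)

lemma PiX_eq_prod_uniform_density:
  "PiX P L X Z = (\<Prod>i<L. uniform_density (P (X ! i)) (Z ! i))"
  unfolding PiX_def uniform_density_def ..

lemma sum_min_uniform_density:
  fixes B C :: "'a::finite set"
  assumes "card B = card C"
  shows "(\<Sum>z\<in>UNIV. min (uniform_density B z) (uniform_density C z))
    = real (card (B \<inter> C)) / real (card B)"
proof -
  have "min (uniform_density B z) (uniform_density C z)
      = (if z \<in> B \<inter> C then 1 else 0) / real (card B)" for z
    using assms by (simp add: uniform_density_def)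
  then show ?thesis
    by (simp add: sum.If_cases Int_def flip: sum_divide_distrib)
qed

lemma sum_uniform_density:
  fixes B :: "'a::finite set"
  assumes "B \<noteq> {}"
  shows "(\<Sum>z\<in>UNIV. uniform_density B z) = 1"
  using sum_min_uniform_density[of B B] assms by simp

definition overlap :: "('w \<Rightarrow> 'w set) \<Rightarrow> 'w \<Rightarrow> 'w \<Rightarrow> real" where
  "overlap P x x' = real (card (P x \<inter> P x')) / real (card (P x))"

lemma sum_PiX_diff_le:
  fixes P :: "'w::finite \<Rightarrow> 'w set"
  assumes P_ne: "\<And>x. P x \<noteq> {}"
    and card_eq: "\<And>i. i < L \<Longrightarrow> card (P (X ! i)) = card (P (X' ! i))"
    and A: "A \<subseteq> {Z. length Z = L}"
  shows "(\<Sum>Z\<in>A. PiX P L X Z) - (\<Sum>Z\<in>A. PiX P L X' Z)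
    \<le> 1 - (\<Prod>i<L. overlap P (X ! i) (X' ! i))"
proof -
  define m where "m Z = (\<Prod>i<L. min (uniform_density (P (X ! i)) (Z ! i))
                                     (uniform_density (P (X' ! i)) (Z ! i)))" for Z
  have fin: "finite {Z::'w list. length Z = L}"
    using finite_lists_length_eq[OF finite_UNIV, of L] by simp
  have total: "(\<Sum>Z | length Z = L. PiX P L X Z) = 1"
    unfolding PiX_eq_prod_uniform_density
      sum_lists_length_prod[where g = "\<lambda>i. uniform_density (P (X ! i))"]
    by (simp add: sum_uniform_density P_ne)
  have common: "(\<Sum>Z | length Z = L. m Z) = (\<Prod>i<L. overlap P (X ! i) (X' ! i))"
    unfolding m_def sum_lists_length_prod[where g = "\<lambda>i z. min (uniform_density (P (X ! i)) z)
                                                            (uniform_density (P (X' ! i)) z)"]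
    by (intro prod.cong refl) (simp add: sum_min_uniform_density card_eq overlap_def)
  have "m Z \<le> PiX P L X Z" "m Z \<le> PiX P L X' Z" for Z
    unfolding m_def PiX_eq_prod_uniform_density by (intro prod_mono; simp)+
  then have "(\<Sum>Z\<in>A. PiX P L X Z) - (\<Sum>Z\<in>A. PiX P L X' Z) \<le> 1 - (\<Sum>Z | length Z = L. m Z)"
    by (intro sum_diff_le_one_minus_sum_common[OF fin A total])
  then show ?thesis
    unfolding common .
qed

lemma abs_gRS_diff_le:
  fixes P :: "'w::finite \<Rightarrow> 'w set"
  assumes P_ne: "\<And>x. P x \<noteq> {}"
    and card_eq: "\<And>i. i < L \<Longrightarrow> card (P (X ! i)) = card (P (X' ! i))"
  shows "\<bar>gRS P L f X c - gRS P L f X' c\<bar> \<le> 1 - (\<Prod>i<L. overlap P (X ! i) (X' ! i))"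
proof -
  have "gRS P L f X c - gRS P L f X' c \<le> 1 - (\<Prod>i<L. overlap P (X ! i) (X' ! i))"
    unfolding gRS_def by (rule sum_PiX_diff_le[OF P_ne card_eq]) auto
  moreover have "gRS P L f X' c - gRS P L f X c \<le> 1 - (\<Prod>i<L. overlap P (X' ! i) (X ! i))"
    unfolding gRS_def by (rule sum_PiX_diff_le[OF P_ne card_eq[symmetric]]) auto
  moreover have "(\<Prod>i<L. overlap P (X' ! i) (X ! i)) = (\<Prod>i<L. overlap P (X ! i) (X' ! i))"
    by (intro prod.cong refl) (simp add: overlap_def card_eq Int_commute)
  ultimately show ?thesis by linarith
qed

lemma overlap_le_one:
  fixes P :: "'w::finite \<Rightarrow> 'w set"
  shows "overlap P x x' \<le> 1"
  by (cases "card (P x) = 0") (auto simp: overlap_def divide_le_eq_1 card_mono)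

lemma overlap_self:
  fixes P :: "'w::finite \<Rightarrow> 'w set"
  assumes "P x \<noteq> {}"
  shows "overlap P x x = 1"
  using assms by (simp add: overlap_def)

lemma qw_eq_Min_overlap: "qw S P x = Min (overlap P x ` S x)"
  unfolding qw_def overlap_def ..

lemma qw_le_overlap:
  fixes S :: "'w::finite \<Rightarrow> 'w set"
  assumes "x' \<in> S x"
  shows "qw S P x \<le> overlap P x x'"
  unfolding qw_eq_Min_overlap using assms by (intro Min_le) auto

lemma qw_mem_unit:
  fixes S P :: "'w::finite \<Rightarrow> 'w set"
  assumes "x \<in> S x"
  shows "qw S P x \<in> {0..1}"
proof -
  have "qw S P x \<in> overlap P x ` S x"
    unfolding qw_eq_Min_overlap using assms by (intro Min_in) auto
  then show ?thesis
    using overlap_le_one[of P x] by (auto simp: overlap_def)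
qed

lemma one_minus_qX_le_prod_overlap:
  fixes S P :: "'w::finite \<Rightarrow> 'w set"
  assumes S_refl: "\<And>x. x \<in> S x" and P_ne: "\<And>x. P x \<noteq> {}"
    and X': "X' \<in> SX S L R X" and X_len: "length X = L"
  shows "1 - qX S P R X \<le> (\<Prod>i<L. overlap P (X ! i) (X' ! i))"
proof -
  define qs where "qs = map (qw S P) X"
  define D where "D = {i. i < L \<and> X' ! i \<noteq> X ! i}"
  have syn: "X' ! i \<in> S (X ! i)" if "i < L" for i
    using X' that by (simp add: SX_def)
  have "prod_list (take R (sort qs)) \<le> (\<Prod>i\<in>D. qs ! i)"
    using X' X_len qw_mem_unit[where S = S, OF S_refl]
    by (intro prod_take_sort_le_prod_nth) (auto simp: qs_def D_def SX_def)
  also have "\<dots> \<le> (\<Prod>i\<in>D. overlap P (X ! i) (X' ! i))"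
  proof (rule prod_mono)
    fix i
    assume "i \<in> D"
    then have "i < L"
      by (simp add: D_def)
    then show "0 \<le> qs ! i \<and> qs ! i \<le> overlap P (X ! i) (X' ! i)"
      using X_len qw_mem_unit[where S = S, OF S_refl] qw_le_overlap[where S = S, OF syn[OF \<open>i < L\<close>]]
      by (simp add: qs_def)
  qed
  also have "\<dots> = (\<Prod>i<L. overlap P (X ! i) (X' ! i))"
    using P_ne by (intro prod.mono_neutral_left) (auto simp: D_def overlap_self)
  finally show ?thesis
    by (simp add: qX_def qs_def)
qed

lemma abs_gRS_diff_le_qX:
  fixes S P :: "'w::finite \<Rightarrow> 'w set"
  assumes S_refl: "\<And>x. x \<in> S x" and P_ne: "\<And>x. P x \<noteq> {}"
    and P_card: "\<And>x x'. x' \<in> S x \<Longrightarrow> card (P x) = card (P x')"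
    and X': "X' \<in> SX S L R X" and X_len: "length X = L"
  shows "\<bar>gRS P L f X c - gRS P L f X' c\<bar> \<le> qX S P R X"
proof -
  have "card (P (X ! i)) = card (P (X' ! i))" if "i < L" for i
    using X' that by (intro P_card) (simp add: SX_def)
  then have "\<bar>gRS P L f X c - gRS P L f X' c\<bar> \<le> 1 - (\<Prod>i<L. overlap P (X ! i) (X' ! i))"
    by (rule abs_gRS_diff_le[where P = P, OF P_ne])
  moreover have "1 - qX S P R X \<le> (\<Prod>i<L. overlap P (X ! i) (X' ! i))"
    by (rule one_minus_qX_le_prod_overlap[where S = S and P = P, OF S_refl P_ne X' X_len])
  ultimately show ?thesis
    by linarith
qed

lemma fRS_eqI:
  assumes "\<And>c. c \<noteq> y \<Longrightarrow> gRS P L f X c < gRS P L f X y"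
  shows "fRS P L f X = y"
  unfolding fRS_def
proof (rule the_equality)
  show "\<forall>c. c \<noteq> y \<longrightarrow> gRS P L f X c < gRS P L f X y"
    using assms by blast
next
  fix c
  assume "\<forall>c'. c' \<noteq> c \<longrightarrow> gRS P L f X c' < gRS P L f X c"
  then show "c = y"
    using assms by (metis less_asym)
qed

lemma gRS_le_yB:
  fixes f :: "'w list \<Rightarrow> 'y::finite"
  assumes "c \<noteq> y"
  shows "gRS P L f X c \<le> gRS P L f X (yB P L f X y)"
proof -
  let ?g = "gRS P L f X"
  have "Max (?g ` {c. c \<noteq> y}) \<in> ?g ` {c. c \<noteq> y}"
    using assms by (intro Max_in finite_imageI finite) blast
  then obtain b where "b \<noteq> y" and b_max: "?g b = Max (?g ` {c. c \<noteq> y})"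
    by auto
  have "?g c' \<le> ?g b" if "c' \<noteq> y" for c'
    unfolding b_max using that by (intro Max_ge) auto
  with \<open>b \<noteq> y\<close> have "\<exists>b. b \<noteq> y \<and> (\<forall>c'. c' \<noteq> y \<longrightarrow> ?g c' \<le> ?g b)"
    by blast
  then have "yB P L f X y \<noteq> y \<and> (\<forall>c'. c' \<noteq> y \<longrightarrow> ?g c' \<le> ?g (yB P L f X y))"
    unfolding yB_def by (rule someI_ex)
  then show ?thesis
    using assms by blast
qed

theorem proposition1:
  fixes S P :: "'w::finite \<Rightarrow> 'w set"
    and L R :: nat
    and f :: "'w list \<Rightarrow> 'y::finite"
    and X :: "'w list" and y :: 'y
  assumes S_refl: "\<And>x. x \<in> S x"
    and S_sym: "\<And>x x'. x' \<in> S x \<Longrightarrow> x \<in> S x'"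
    and P_ne: "\<And>x. P x \<noteq> {}"
    and L_pos: "L \<ge> 1" and R_le: "R \<le> L"
    and Y_card: "card (UNIV :: 'y set) \<ge> 2"
    and P_card: "\<And>x x'. x' \<in> S x \<Longrightarrow> card (P x) = card (P x')"
    and X_len: "length X = L"
    and Delta: "gRS P L f X y - gRS P L f X (yB P L f X y) - 2 * qX S P R X > 0"
  shows "\<forall>X'\<in>SX S L R X.
           (\<forall>c. c \<noteq> y \<longrightarrow> gRS P L f X' c < gRS P L f X' y)
           \<and> fRS P L f X' = y \<and> fRS P L f X = y"
proof -
  have robust: "gRS P L f X' c < gRS P L f X' y" if X': "X' \<in> SX S L R X" and "c \<noteq> y" for X' c
  proof -
    have "\<bar>gRS P L f X d - gRS P L f X' d\<bar> \<le> qX S P R X" for d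
      by (rule abs_gRS_diff_le_qX[OF S_refl P_ne P_card X' X_len])
    from this[of c] this[of y] show ?thesis
      using gRS_le_yB[OF \<open>c \<noteq> y\<close>, of P L f X] Delta by linarith
  qed
  have "X \<in> SX S L R X"
    using X_len S_refl by (simp add: SX_def)
  then show ?thesis
    using robust fRS_eqI[OF robust] by blast
qed

end
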